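(* Fix an iteration $t$, a finite slicing set $\mathcal U=\{u_\ell\}_{\ell=1}^m\subset\mathbb S^{d-1}$ and an index $\ell\in[m]$. Let $h_t=(h_{t,1},\dots,h_{t,m})$ be any HUC vector for $\mathcal U$ at iteration $t$. Let $N_t\sim\mathcal N(0,\Sigma_t)$ be independent of the data and of $R_t$, and suppose $v_{t,\ell}:=u_\ell^\top\Sigma_tu_\ell>0$. Then for every $\alpha>1$, every $\theta\in\Theta$, every $(s_i,s_j)\in\mathcal Q$ with positive prior probabilities and every history $y_{<t}$ in the support, \[ \mathtt D_\alpha\!\left(\mathrm{Law}\big(\langle Y_t,u_\ell\rangle\mid S=s_i,\theta\big)\,\Big\|\,\mathrm{Law}\big(\langle Y_t,u_\ell\rangle\mid S=s_j,\theta\big)\right)\le\frac\alpha2\,\frac{h_{t,\ell}}{v_{t,\ell}}, \] where $Y_t=f_t(X,y_{<t};R_t)+N_t$ with $X\sim\mu^\theta_s$ under secret $s$ and $R_t\sim\mathbb P_{\eta,\rho}$.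
   Context: Pufferfish scenario $(\mathcal S,\mathcal Q,\Theta)$: each $\theta$ a joint law of a secret $S$ and dataset $X\in\bar{\mathcal X}^n$; $\mu^\theta_s$ the law of $X$ given $S=s$ under $\theta$; $\Pi(\mu,\nu)$ couplings. $\mathtt D_\alpha$ is R\'enyi divergence $\frac1{\alpha-1}\log\mathbb E_Q[(dP/dQ)^\alpha]$. At iteration $t$, subsampling randomness $R_t\sim\mathbb P_{\eta,\rho}$ (independent of data and secret) and a history $y_{<t}$ determine a pre-noise update $f_t(x,y_{<t};R_t)\in\mathbb R^d$ (the update map applied to the clipped, averaged minibatch gradient). HUC: $h_t\in\mathbb R^m_+$ is a HUC for $\mathcal U$ at iteration $t$ if for all $\theta\in\Theta$, $(s_i,s_j)\in\mathcal Q$, histories $y_{<t}$ in the support and every coupling $\gamma\in\Pi(\mu^\theta_{s_i},\mu^\theta_{s_j})$, $\gamma\times\mathbb P_{\eta,\rho}$-a.s. in $((X,X'),R_t)$, $|\langle f_t(X,y_{<t};R_t)-f_t(X',y_{<t};R_t),u_\ell\rangle|\le\sqrt{h_{t,\ell}}$ for all $\ell\in[m]$. *)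

theory Defs
  imports "HOL-Probability.Probability"
begin

definition renyi_div :: "real \<Rightarrow> 'a measure \<Rightarrow> 'a measure \<Rightarrow> ereal" where
  "renyi_div \<alpha> P Q =
     (if absolutely_continuous Q P \<and> sets P = sets Q then
        (let I = (\<integral>\<^sup>+ x. ennreal ((enn2real (RN_deriv Q P x)) powr \<alpha>) \<partial>Q) in
          if I = \<infinity> then \<infinity> else ereal (ln (enn2real I) / (\<alpha> - 1)))
      else \<infinity>)"

definition couplings :: "'a measure \<Rightarrow> 'b measure \<Rightarrow> ('a \<times> 'b) measure set" where
  "couplings M N = {\<gamma>. prob_space \<gamma> \<and> sets \<gamma> = sets (M \<Otimes>\<^sub>M N) \<and>
                        distr \<gamma> M fst = M \<and> distr \<gamma> N snd = N}"

definition gaussian_vec :: "(real^'d) measure \<Rightarrow> real^'d^'d \<Rightarrow> bool" where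
  "gaussian_vec N \<Sigma> \<longleftrightarrow> prob_space N \<and> sets N = sets borel \<and>
     (\<forall>w. distr N borel (\<lambda>x. x \<bullet> w) =
            (if w \<bullet> (\<Sigma> *v w) = 0 then return borel 0
             else density lborel (normal_density 0 (sqrt (w \<bullet> (\<Sigma> *v w))))))"

text \<open>Theta: scenario parameters; Q: discriminative pairs;
  prior th s: prior probability of secret s under th; mu th s: law of the dataset given
  S = s under th; Hist: histories in the support; PR: law of the subsampling randomness;
  f x y r: pre-noise update; u: slicing directions u_0..u_{m-1}; h: the HUC vector.\<close>
definition is_HUC ::
  "'th set \<Rightarrow> ('s \<times> 's) set \<Rightarrow> ('th \<Rightarrow> 's \<Rightarrow> real) \<Rightarrow> ('th \<Rightarrow> 's \<Rightarrow> 'x measure) \<Rightarrow>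
   'h set \<Rightarrow> 'r measure \<Rightarrow> ('x \<Rightarrow> 'h \<Rightarrow> 'r \<Rightarrow> real^'d) \<Rightarrow> (nat \<Rightarrow> real^'d) \<Rightarrow> nat \<Rightarrow>
   (nat \<Rightarrow> real) \<Rightarrow> bool" where
  "is_HUC \<Theta> Q prior mu Hist PR f u m h \<longleftrightarrow>
     (\<forall>l<m. 0 \<le> h l) \<and>
     (\<forall>\<theta>\<in>\<Theta>. \<forall>(si, sj)\<in>Q. 0 < prior \<theta> si \<longrightarrow> 0 < prior \<theta> sj \<longrightarrow>
        (\<forall>y\<in>Hist. \<forall>\<gamma>\<in>couplings (mu \<theta> si) (mu \<theta> sj).
           AE z in \<gamma> \<Otimes>\<^sub>M PR. \<forall>l<m.
             \<bar>(f (fst (fst z)) y (snd z) - f (snd (fst z)) y (snd z)) \<bullet> u l\<bar> \<le> sqrt (h l)))"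

end

theory Submission
  imports Defs
begin

(* Under secret s the projected output <Y, u> is a Gaussian mixture: its density averages the
   N(<f(X, R), u>, v) densities over the law of (X, R).  Realising both mixtures over one coupling
   of the two data laws (the independent coupling suffices, since the HUC bound holds for every
   coupling) with component means a and b, joint convexity of (p, q) -> p^alpha q^(1 - alpha)
   bounds the Renyi moment of the mixtures by the average of the Renyi moments of the components,
   and for two Gaussians of equal variance v that moment is exp (alpha (alpha - 1) (a - b)^2 / (2 v)).
   The HUC bound (a - b)^2 <= h then yields D_alpha <= alpha h / (2 v). *)

lemma normal_density_powr_mult_powr:
  fixes a b z s \<alpha> :: real
  assumes s: "0 < s"
  shows "normal_density a s z powr \<alpha> * normal_density b s z powr (1 - \<alpha>) =
         exp (\<alpha> * (\<alpha> - 1) * (a - b)\<^sup>2 / (2 * s\<^sup>2)) * normal_density (\<alpha> * a + (1 - \<alpha>) * b) s z"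
proof -
  define K where "K = 1 / sqrt (2 * pi * s\<^sup>2)"
  have K: "0 < K" using s by (simp add: K_def)
  have nd: "normal_density c s z = K * exp (-(z - c)\<^sup>2 / (2 * s\<^sup>2))" for c
    by (simp add: normal_density_def K_def)
  have "normal_density a s z powr \<alpha> * normal_density b s z powr (1 - \<alpha>)
      = exp (\<alpha> * ln (normal_density a s z) + (1 - \<alpha>) * ln (normal_density b s z))"
    using normal_density_pos[OF s, of a z] normal_density_pos[OF s, of b z] by (simp add: powr_def exp_add)
  also have "\<alpha> * ln (normal_density a s z) + (1 - \<alpha>) * ln (normal_density b s z)
      = \<alpha> * (\<alpha> - 1) * (a - b)\<^sup>2 / (2 * s\<^sup>2) + (ln K - (z - (\<alpha> * a + (1 - \<alpha>) * b))\<^sup>2 / (2 * s\<^sup>2))"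
    using s K by (simp add: nd ln_mult field_simps power2_eq_square)
  also have "exp \<dots> = exp (\<alpha> * (\<alpha> - 1) * (a - b)\<^sup>2 / (2 * s\<^sup>2)) * normal_density (\<alpha> * a + (1 - \<alpha>) * b) s z"
    using K by (simp add: exp_add nd exp_diff exp_minus field_simps)
  finally show ?thesis .
qed

lemma nn_integral_normal_density:
  assumes "0 < s"
  shows "(\<integral>\<^sup>+ z. ennreal (normal_density c s z) \<partial>lborel) = 1"
proof -
  interpret prob_space "density lborel (normal_density c s)"
    using assms by (rule prob_space_normal_density)
  show ?thesis
    using emeasure_space_1 by (simp add: emeasure_density)
qed

lemma nn_integral_normal_density_powr_mult_powr:
  fixes a b s \<alpha> :: real
  assumes "0 < s"
  shows "(\<integral>\<^sup>+ z. ennreal (normal_density a s z powr \<alpha> * normal_density b s z powr (1 - \<alpha>)) \<partial>lborel)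
       = ennreal (exp (\<alpha> * (\<alpha> - 1) * (a - b)\<^sup>2 / (2 * s\<^sup>2)))"
  using assms
  by (simp add: normal_density_powr_mult_powr ennreal_mult nn_integral_cmult nn_integral_normal_density)

lemma normal_mixture_density_pos_finite:
  assumes "prob_space M" and [measurable]: "a \<in> borel_measurable M" and s: "0 < s"
  shows "0 < (\<integral>\<^sup>+w. ennreal (normal_density (a w) s z) \<partial>M)"
    and "(\<integral>\<^sup>+w. ennreal (normal_density (a w) s z) \<partial>M) < \<infinity>"
proof -
  interpret prob_space M by fact
  have density_meas: "(\<lambda>w. ennreal (normal_density (a w) s z)) \<in> borel_measurable M"
    by (simp add: normal_density_def)
  have "\<not> (AE w in M. ennreal (normal_density (a w) s z) = 0)"
  proof
    assume "AE w in M. ennreal (normal_density (a w) s z) = 0"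
    then have "AE w in M. False"
      using normal_density_pos[OF s] by (auto elim!: AE_mp intro!: AE_I2 simp: less_le)
    then show False by simp
  qed
  then show "0 < (\<integral>\<^sup>+w. ennreal (normal_density (a w) s z) \<partial>M)"
    using nn_integral_0_iff_AE[OF density_meas] by (simp add: zero_less_iff_neq_zero)
  have "normal_density (a w) s z \<le> 1 / sqrt (2 * pi * s\<^sup>2)" for w
    unfolding normal_density_def by (intro mult_left_le) auto
  then have "(\<integral>\<^sup>+w. ennreal (normal_density (a w) s z) \<partial>M) \<le> (\<integral>\<^sup>+w. ennreal (1 / sqrt (2 * pi * s\<^sup>2)) \<partial>M)"
    by (intro nn_integral_mono ennreal_leI)
  also have "\<dots> < \<infinity>"
    by (simp add: emeasure_space_1)
  finally show "(\<integral>\<^sup>+w. ennreal (normal_density (a w) s z) \<partial>M) < \<infinity>" .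
qed

lemma powr_tangent_le:
  fixes a b t \<alpha> :: real
  assumes "0 < a" "0 < b" "0 < t" "1 < \<alpha>"
  shows "\<alpha> * t powr (\<alpha> - 1) * a \<le> a powr \<alpha> * b powr (1 - \<alpha>) + (\<alpha> - 1) * t powr \<alpha> * b"
proof -
  have "(a / b) * t powr (\<alpha> - 1) \<le> (a / b) powr \<alpha> / \<alpha> + (t powr (\<alpha> - 1)) powr (\<alpha> / (\<alpha> - 1)) / (\<alpha> / (\<alpha> - 1))"
    using assms by (intro Youngs_inequality) (auto simp: field_simps)
  also have "(t powr (\<alpha> - 1)) powr (\<alpha> / (\<alpha> - 1)) = t powr \<alpha>"
    using assms by (simp add: powr_powr)
  finally have "\<alpha> * b * ((a / b) * t powr (\<alpha> - 1)) \<le> \<alpha> * b * ((a / b) powr \<alpha> / \<alpha> + t powr \<alpha> / (\<alpha> / (\<alpha> - 1)))"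
    using assms by (intro mult_left_mono) auto
  moreover have "\<alpha> * b * ((a / b) * t powr (\<alpha> - 1)) = \<alpha> * t powr (\<alpha> - 1) * a"
    using assms by simp
  moreover have "\<alpha> * b * ((a / b) powr \<alpha> / \<alpha> + t powr \<alpha> / (\<alpha> / (\<alpha> - 1)))
      = a powr \<alpha> * b powr (1 - \<alpha>) + (\<alpha> - 1) * t powr \<alpha> * b"
    using assms by (simp add: powr_divide powr_diff field_simps)
  ultimately show ?thesis
    by simp
qed

lemma powr_mult_powr_le_nn_integral:
  fixes A B :: "'a \<Rightarrow> real"
  assumes [measurable]: "A \<in> borel_measurable M" "B \<in> borel_measurable M"
    and pos: "\<And>x. x \<in> space M \<Longrightarrow> 0 < A x \<and> 0 < B x"
    and \<alpha>: "1 < \<alpha>"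
    and int_A: "(\<integral>\<^sup>+x. ennreal (A x) \<partial>M) = ennreal p" and p: "0 < p"
    and int_B: "(\<integral>\<^sup>+x. ennreal (B x) \<partial>M) = ennreal q" and q: "0 < q"
  shows "ennreal (p powr \<alpha> * q powr (1 - \<alpha>)) \<le> (\<integral>\<^sup>+x. ennreal (A x powr \<alpha> * B x powr (1 - \<alpha>)) \<partial>M)"
    (is "_ \<le> ?F")
proof (cases "?F = \<infinity>")
  case False
  then obtain F where F: "?F = ennreal F" "0 \<le> F"
    by (cases ?F) auto
  define t where "t = p / q"
  have t: "0 < t" using p q by (simp add: t_def)
  \<comment> \<open>integrate the tangent inequality at the point t = p/q\<close>
  have "ennreal (\<alpha> * t powr (\<alpha> - 1) * p) = (\<integral>\<^sup>+x. ennreal (\<alpha> * t powr (\<alpha> - 1) * A x) \<partial>M)"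
    using t \<alpha> p by (simp add: ennreal_mult' nn_integral_cmult int_A)
  also have "\<dots> \<le> (\<integral>\<^sup>+x. ennreal (A x powr \<alpha> * B x powr (1 - \<alpha>) + (\<alpha> - 1) * t powr \<alpha> * B x) \<partial>M)"
    using pos t \<alpha> by (intro nn_integral_mono ennreal_leI powr_tangent_le) auto
  also have "\<dots> = (\<integral>\<^sup>+x. ennreal (A x powr \<alpha> * B x powr (1 - \<alpha>)) + ennreal ((\<alpha> - 1) * t powr \<alpha>) * ennreal (B x) \<partial>M)"
    using pos \<alpha> by (intro nn_integral_cong) (simp add: ennreal_plus ennreal_mult' less_imp_le)
  also have "\<dots> = ennreal (F + (\<alpha> - 1) * t powr \<alpha> * q)"
    using F \<alpha> q by (simp add: nn_integral_add nn_integral_cmult int_B ennreal_mult ennreal_plus)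
  finally have "\<alpha> * t powr (\<alpha> - 1) * p \<le> F + (\<alpha> - 1) * t powr \<alpha> * q"
    using F \<alpha> q t by (subst (asm) ennreal_le_iff) auto
  moreover have "t powr (\<alpha> - 1) * p = t powr \<alpha> * q"
    using t q by (simp add: t_def powr_diff field_simps)
  ultimately have "t powr \<alpha> * q \<le> F"
    by (simp add: algebra_simps)
  moreover have "p powr \<alpha> * q powr (1 - \<alpha>) = t powr \<alpha> * q"
    using p q by (simp add: t_def powr_divide powr_diff field_simps)
  ultimately show ?thesis
    using F by simp
qed simp

lemma density_density_divide:
  fixes p q :: "'a \<Rightarrow> real"
  assumes [measurable]: "p \<in> borel_measurable M" "q \<in> borel_measurable M"
    and q_pos: "\<And>z. z \<in> space M \<Longrightarrow> 0 < q z"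
  shows "density (density M q) (\<lambda>z. p z / q z) = density M p"
proof -
  have "density (density M q) (\<lambda>z. p z / q z) = density M (\<lambda>z. ennreal (q z) * ennreal (p z / q z))"
    by (rule density_density_eq) auto
  also have "\<dots> = density M p"
  proof (intro density_cong AE_I2)
    fix z assume "z \<in> space M"
    then show "ennreal (q z) * ennreal (p z / q z) = ennreal (p z)"
      using q_pos[of z] by (simp add: ennreal_mult'[symmetric])
  qed auto
  finally show ?thesis .
qed

lemma (in sigma_finite_measure) nn_integral_RN_deriv_powr_density:
  fixes p q :: "'a \<Rightarrow> real"
  assumes [measurable]: "p \<in> borel_measurable M" "q \<in> borel_measurable M"
    and p_nonneg: "\<And>z. z \<in> space M \<Longrightarrow> 0 \<le> p z" and q_pos: "\<And>z. z \<in> space M \<Longrightarrow> 0 < q z"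
  shows "(\<integral>\<^sup>+z. ennreal (enn2real (RN_deriv (density M q) (density M p) z) powr \<alpha>) \<partial>density M q)
       = (\<integral>\<^sup>+z. ennreal (p z powr \<alpha> * q z powr (1 - \<alpha>)) \<partial>M)"
proof -
  have "sigma_finite_measure (density M q)"
    by (subst sigma_finite_iff_density_finite) auto
  then have "AE z in density M q. ennreal (p z / q z) = RN_deriv (density M q) (density M p) z"
    using density_density_divide[of p M q] q_pos by (intro sigma_finite_measure.RN_deriv_unique) auto
  then have "AE z in density M q. enn2real (RN_deriv (density M q) (density M p) z) = p z / q z"
    using AE_space[of "density M q"]
    by eventually_elim (metis enn2real_ennreal less_imp_le divide_nonneg_pos p_nonneg q_pos space_density)
  then have "(\<integral>\<^sup>+z. ennreal (enn2real (RN_deriv (density M q) (density M p) z) powr \<alpha>) \<partial>density M q)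
      = (\<integral>\<^sup>+z. ennreal ((p z / q z) powr \<alpha>) \<partial>density M q)"
    by (intro nn_integral_cong_AE) (erule eventually_mono, simp)
  also have "\<dots> = (\<integral>\<^sup>+z. ennreal (q z) * ennreal ((p z / q z) powr \<alpha>) \<partial>M)"
    by (rule nn_integral_density) auto
  also have "\<dots> = (\<integral>\<^sup>+z. ennreal (p z powr \<alpha> * q z powr (1 - \<alpha>)) \<partial>M)"
    using p_nonneg q_pos
    by (intro nn_integral_cong) (simp add: ennreal_mult'[symmetric] less_imp_le powr_divide powr_diff field_simps)
  finally show ?thesis .
qed

lemma (in sigma_finite_measure) renyi_div_density_le:
  fixes p q :: "'a \<Rightarrow> real"
  assumes [measurable]: "p \<in> borel_measurable M" "q \<in> borel_measurable M"
    and p_nonneg: "\<And>z. z \<in> space M \<Longrightarrow> 0 \<le> p z" and q_pos: "\<And>z. z \<in> space M \<Longrightarrow> 0 < q z"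
    and \<alpha>: "1 < \<alpha>" and c: "0 \<le> c"
    and moment: "(\<integral>\<^sup>+z. ennreal (p z powr \<alpha> * q z powr (1 - \<alpha>)) \<partial>M) \<le> ennreal (exp ((\<alpha> - 1) * c))"
  shows "renyi_div \<alpha> (density M p) (density M q) \<le> ereal c"
proof -
  define I where "I = (\<integral>\<^sup>+z. ennreal (enn2real (RN_deriv (density M q) (density M p) z) powr \<alpha>) \<partial>density M q)"
  have I_le: "I \<le> ennreal (exp ((\<alpha> - 1) * c))"
    using moment p_nonneg q_pos by (simp add: I_def nn_integral_RN_deriv_powr_density)
  have "absolutely_continuous (density M q) (density M p)"
    using absolutely_continuousI_density[of "\<lambda>z. ennreal (p z / q z)" "density M q"]
    by (simp add: density_density_divide q_pos)
  moreover have "I \<noteq> \<infinity>"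
    using I_le by (auto simp: top_unique)
  ultimately have renyi: "renyi_div \<alpha> (density M p) (density M q) = ereal (ln (enn2real I) / (\<alpha> - 1))"
    unfolding renyi_div_def Let_def I_def[symmetric] by simp
  \<comment> \<open>the case I = 0 needs c \<ge> 0, because ln 0 = 0 in HOL\<close>
  have "ln (enn2real I) \<le> (\<alpha> - 1) * c"
  proof (cases "enn2real I = 0")
    case False
    then have "0 < enn2real I"
      using enn2real_nonneg[of I] by linarith
    moreover have "enn2real I \<le> exp ((\<alpha> - 1) * c)"
      using enn2real_mono[OF I_le] by simp
    ultimately have "ln (enn2real I) \<le> ln (exp ((\<alpha> - 1) * c))"
      by (intro ln_mono) auto
    then show ?thesis
      by simp
  qed (use \<alpha> c in simp)
  then show ?thesis
    using \<alpha> by (simp add: renyi pos_divide_le_eq mult.commute)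
qed

lemma nn_integral_mixture_normal_density_powr_mult_powr_le:
  assumes "prob_space C" and [measurable]: "a \<in> borel_measurable C" "b \<in> borel_measurable C"
    and close: "AE w in C. (a w - b w)\<^sup>2 \<le> \<Delta>" and s: "0 < s" and \<alpha>: "1 < \<alpha>"
  shows "(\<integral>\<^sup>+z. \<integral>\<^sup>+w. ennreal (normal_density (a w) s z powr \<alpha> * normal_density (b w) s z powr (1 - \<alpha>)) \<partial>C \<partial>lborel)
       \<le> ennreal (exp ((\<alpha> - 1) * (\<alpha> / 2 * (\<Delta> / s\<^sup>2))))"
proof -
  interpret C: prob_space C by fact
  interpret CL: pair_sigma_finite C lborel ..
  have "(\<integral>\<^sup>+z. \<integral>\<^sup>+w. ennreal (normal_density (a w) s z powr \<alpha> * normal_density (b w) s z powr (1 - \<alpha>)) \<partial>C \<partial>lborel)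
      = (\<integral>\<^sup>+w. \<integral>\<^sup>+z. ennreal (normal_density (a w) s z powr \<alpha> * normal_density (b w) s z powr (1 - \<alpha>)) \<partial>lborel \<partial>C)"
    by (rule CL.Fubini') (simp add: normal_density_def)
  also have "\<dots> = (\<integral>\<^sup>+w. ennreal (exp (\<alpha> * (\<alpha> - 1) * (a w - b w)\<^sup>2 / (2 * s\<^sup>2))) \<partial>C)"
    using s by (simp add: nn_integral_normal_density_powr_mult_powr)
  also have "\<dots> \<le> (\<integral>\<^sup>+w. ennreal (exp ((\<alpha> - 1) * (\<alpha> / 2 * (\<Delta> / s\<^sup>2)))) \<partial>C)"
    using close
  proof (intro nn_integral_mono_AE, eventually_elim)
    case (elim w)
    have "\<alpha> * (\<alpha> - 1) * (a w - b w)\<^sup>2 \<le> \<alpha> * (\<alpha> - 1) * \<Delta>"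
      using elim \<alpha> by (intro mult_left_mono) auto
    then have "\<alpha> * (\<alpha> - 1) * (a w - b w)\<^sup>2 / (2 * s\<^sup>2) \<le> \<alpha> * (\<alpha> - 1) * \<Delta> / (2 * s\<^sup>2)"
      by (intro divide_right_mono) auto
    also have "\<dots> = (\<alpha> - 1) * (\<alpha> / 2 * (\<Delta> / s\<^sup>2))"
      by (simp add: field_simps)
    finally show ?case
      by (intro ennreal_leI) simp
  qed
  also have "\<dots> = ennreal (exp ((\<alpha> - 1) * (\<alpha> / 2 * (\<Delta> / s\<^sup>2))))"
    by (simp add: C.emeasure_space_1)
  finally show ?thesis .
qed

lemma renyi_div_normal_mixtures_le:
  assumes C: "prob_space C" and [measurable]: "a \<in> borel_measurable C" "b \<in> borel_measurable C"
    and close: "AE w in C. (a w - b w)\<^sup>2 \<le> \<Delta>" and \<Delta>: "0 \<le> \<Delta>" and s: "0 < s" and \<alpha>: "1 < \<alpha>"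
  shows "renyi_div \<alpha> (density lborel (\<lambda>z. \<integral>\<^sup>+w. ennreal (normal_density (a w) s z) \<partial>C))
                    (density lborel (\<lambda>z. \<integral>\<^sup>+w. ennreal (normal_density (b w) s z) \<partial>C))
         \<le> ereal (\<alpha> / 2 * (\<Delta> / s\<^sup>2))"
proof -
  interpret C: prob_space C by fact
  define pa where "pa z = enn2real (\<integral>\<^sup>+w. ennreal (normal_density (a w) s z) \<partial>C)" for z
  define pb where "pb z = enn2real (\<integral>\<^sup>+w. ennreal (normal_density (b w) s z) \<partial>C)" for z
  have pa: "(\<integral>\<^sup>+w. ennreal (normal_density (a w) s z) \<partial>C) = ennreal (pa z)" "0 < pa z" for z
    using normal_mixture_density_pos_finite[OF C _ s, of a z] by (auto simp: pa_def enn2real_positive_iff)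
  have pb: "(\<integral>\<^sup>+w. ennreal (normal_density (b w) s z) \<partial>C) = ennreal (pb z)" "0 < pb z" for z
    using normal_mixture_density_pos_finite[OF C _ s, of b z] by (auto simp: pb_def enn2real_positive_iff)
  have [measurable]: "pa \<in> borel_measurable lborel" "pb \<in> borel_measurable lborel"
    unfolding pa_def pb_def normal_density_def by measurable
  have "(\<integral>\<^sup>+z. ennreal (pa z powr \<alpha> * pb z powr (1 - \<alpha>)) \<partial>lborel)
      \<le> (\<integral>\<^sup>+z. \<integral>\<^sup>+w. ennreal (normal_density (a w) s z powr \<alpha> * normal_density (b w) s z powr (1 - \<alpha>)) \<partial>C \<partial>lborel)"
    using normal_density_pos[OF s] \<alpha> pa pb
    by (intro nn_integral_mono powr_mult_powr_le_nn_integral) (auto simp: normal_density_def)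
  also have "\<dots> \<le> ennreal (exp ((\<alpha> - 1) * (\<alpha> / 2 * (\<Delta> / s\<^sup>2))))"
    using C close s \<alpha> by (intro nn_integral_mixture_normal_density_powr_mult_powr_le) auto
  finally have "renyi_div \<alpha> (density lborel pa) (density lborel pb) \<le> ereal (\<alpha> / 2 * (\<Delta> / s\<^sup>2))"
    using pa(2) pb(2) \<alpha> \<Delta> by (intro lborel.renyi_div_density_le) (auto simp: less_imp_le)
  then show ?thesis
    by (simp add: pa(1) pb(1))
qed

lemma nn_integral_indicator_plus_normal:
  assumes A: "A \<in> sets borel" and [measurable]: "W \<in> borel_measurable N"
    and W_law: "distr N borel W = density lborel (normal_density 0 s)"
  shows "(\<integral>\<^sup>+n. indicator A (c + W n) \<partial>N) = (\<integral>\<^sup>+z. ennreal (normal_density c s z) * indicator A z \<partial>lborel)"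
proof -
  have "(\<integral>\<^sup>+n. indicator A (c + W n) \<partial>N) = (\<integral>\<^sup>+t. indicator A (c + t) \<partial>distr N borel W)"
    using A by (subst nn_integral_distr) auto
  also have "\<dots> = (\<integral>\<^sup>+t. ennreal (normal_density 0 s t) * indicator A (c + t) \<partial>lborel)"
    using A unfolding W_law by (subst nn_integral_density) auto
  also have "\<dots> = (\<integral>\<^sup>+t. ennreal (normal_density c s (c + t)) * indicator A (c + t) \<partial>lborel)"
    by (simp add: normal_density_def)
  also have "\<dots> = (\<integral>\<^sup>+z. ennreal (normal_density c s z) * indicator A z \<partial>distr lborel borel ((+) c))"
    using A by (subst nn_integral_distr) (auto simp: normal_density_def)
  also have "\<dots> = (\<integral>\<^sup>+z. ennreal (normal_density c s z) * indicator A z \<partial>lborel)"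
    by (simp add: lborel_distr_plus)
  finally show ?thesis .
qed

lemma distr_plus_normal_noise:
  fixes G :: "'a \<times> 'b \<Rightarrow> real" and W :: "'c \<Rightarrow> real"
  assumes "prob_space M1" "prob_space M2" "prob_space N"
    and [measurable]: "G \<in> borel_measurable (M1 \<Otimes>\<^sub>M M2)" "W \<in> borel_measurable N"
    and W_law: "distr N borel W = density lborel (normal_density 0 s)"
  shows "distr (M1 \<Otimes>\<^sub>M (M2 \<Otimes>\<^sub>M N)) borel (\<lambda>(x, r, n). G (x, r) + W n)
       = density lborel (\<lambda>z. \<integral>\<^sup>+p. ennreal (normal_density (G p) s z) \<partial>(M1 \<Otimes>\<^sub>M M2))"
proof (rule measure_eqI)
  interpret M2: prob_space M2 by fact
  interpret N: prob_space N by fact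
  interpret M2N: prob_space "M2 \<Otimes>\<^sub>M N" by (intro prob_space_pair) fact+
  interpret M1M2: prob_space "M1 \<Otimes>\<^sub>M M2" by (intro prob_space_pair) fact+
  interpret L: pair_sigma_finite "M1 \<Otimes>\<^sub>M M2" lborel ..
  fix A assume "A \<in> sets (distr (M1 \<Otimes>\<^sub>M (M2 \<Otimes>\<^sub>M N)) borel (\<lambda>(x, r, n). G (x, r) + W n))"
  then have A[measurable]: "A \<in> sets borel" by simp
  have "emeasure (distr (M1 \<Otimes>\<^sub>M (M2 \<Otimes>\<^sub>M N)) borel (\<lambda>(x, r, n). G (x, r) + W n)) A
      = (\<integral>\<^sup>+w. indicator A ((\<lambda>(x, r, n). G (x, r) + W n) w) \<partial>(M1 \<Otimes>\<^sub>M (M2 \<Otimes>\<^sub>M N)))"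
    using nn_integral_distr[of "\<lambda>(x, r, n). G (x, r) + W n" "M1 \<Otimes>\<^sub>M (M2 \<Otimes>\<^sub>M N)" borel "indicator A"]
    by simp
  also have "\<dots> = (\<integral>\<^sup>+x. \<integral>\<^sup>+rn. indicator A (G (x, fst rn) + W (snd rn)) \<partial>(M2 \<Otimes>\<^sub>M N) \<partial>M1)"
    by (subst M2N.nn_integral_fst[symmetric]) (auto simp: case_prod_beta)
  also have "\<dots> = (\<integral>\<^sup>+x. \<integral>\<^sup>+r. \<integral>\<^sup>+n. indicator A (G (x, r) + W n) \<partial>N \<partial>M2 \<partial>M1)"
    by (intro nn_integral_cong, subst N.nn_integral_fst[symmetric]) auto
  also have "\<dots> = (\<integral>\<^sup>+p. \<integral>\<^sup>+z. ennreal (normal_density (G p) s z) * indicator A z \<partial>lborel \<partial>(M1 \<Otimes>\<^sub>M M2))"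
    using nn_integral_indicator_plus_normal[OF A _ W_law]
    by (subst M2.nn_integral_fst[symmetric]) (auto simp: normal_density_def)
  also have "\<dots> = (\<integral>\<^sup>+z. \<integral>\<^sup>+p. ennreal (normal_density (G p) s z) * indicator A z \<partial>(M1 \<Otimes>\<^sub>M M2) \<partial>lborel)"
    by (subst L.Fubini') (auto simp: normal_density_def)
  also have "\<dots> = (\<integral>\<^sup>+z. (\<integral>\<^sup>+p. ennreal (normal_density (G p) s z) \<partial>(M1 \<Otimes>\<^sub>M M2)) * indicator A z \<partial>lborel)"
    by (intro nn_integral_cong nn_integral_multc) (auto simp: normal_density_def)
  also have "\<dots> = emeasure (density lborel (\<lambda>z. \<integral>\<^sup>+p. ennreal (normal_density (G p) s z) \<partial>(M1 \<Otimes>\<^sub>M M2))) A"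
    by (subst emeasure_density) (auto simp: normal_density_def)
  finally show "emeasure (distr (M1 \<Otimes>\<^sub>M (M2 \<Otimes>\<^sub>M N)) borel (\<lambda>(x, r, n). G (x, r) + W n)) A
      = emeasure (density lborel (\<lambda>z. \<integral>\<^sup>+p. ennreal (normal_density (G p) s z) \<partial>(M1 \<Otimes>\<^sub>M M2))) A" .
qed simp

lemma distr_inner_plus_gaussian_vec:
  fixes F :: "'a \<times> 'b \<Rightarrow> real^'d"
  assumes "prob_space M1" "prob_space M2" and N: "gaussian_vec N \<Sigma>" and w: "0 < w \<bullet> (\<Sigma> *v w)"
    and [measurable]: "F \<in> borel_measurable (M1 \<Otimes>\<^sub>M M2)"
  shows "distr (M1 \<Otimes>\<^sub>M (M2 \<Otimes>\<^sub>M N)) borel (\<lambda>(x, r, n). (F (x, r) + n) \<bullet> w)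
       = density lborel (\<lambda>z. \<integral>\<^sup>+p. ennreal (normal_density (F p \<bullet> w) (sqrt (w \<bullet> (\<Sigma> *v w))) z) \<partial>(M1 \<Otimes>\<^sub>M M2))"
proof -
  have "prob_space N" and N_sets: "sets N = sets borel"
    and N_law: "distr N borel (\<lambda>x. x \<bullet> w) = density lborel (normal_density 0 (sqrt (w \<bullet> (\<Sigma> *v w))))"
    using N w by (auto simp: gaussian_vec_def)
  moreover have "(\<lambda>n. n \<bullet> w) \<in> borel_measurable N"
    unfolding measurable_cong_sets[OF N_sets refl] by simp
  ultimately have "distr (M1 \<Otimes>\<^sub>M (M2 \<Otimes>\<^sub>M N)) borel (\<lambda>(x, r, n). F (x, r) \<bullet> w + n \<bullet> w)
      = density lborel (\<lambda>z. \<integral>\<^sup>+p. ennreal (normal_density (F p \<bullet> w) (sqrt (w \<bullet> (\<Sigma> *v w))) z) \<partial>(M1 \<Otimes>\<^sub>M M2))"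
    using assms N_law by (intro distr_plus_normal_noise[where G = "\<lambda>p. F p \<bullet> w", simplified]) auto
  moreover have "(\<lambda>(x, r, n). (F (x, r) + n) \<bullet> w) = (\<lambda>(x, r, n). F (x, r) \<bullet> w + n \<bullet> w)"
    by (auto simp: inner_add_left)
  ultimately show ?thesis
    by simp
qed

lemma nn_integral_pair_measure_fst_fst:
  assumes "prob_space M2" "sigma_finite_measure M3"
    and [measurable]: "F \<in> borel_measurable (M1 \<Otimes>\<^sub>M M3)"
  shows "(\<integral>\<^sup>+w. F (fst (fst w), snd w) \<partial>((M1 \<Otimes>\<^sub>M M2) \<Otimes>\<^sub>M M3)) = (\<integral>\<^sup>+p. F p \<partial>(M1 \<Otimes>\<^sub>M M3))"
proof -
  interpret M2: prob_space M2 by fact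
  interpret M3: sigma_finite_measure M3 by fact
  have "(\<integral>\<^sup>+w. F (fst (fst w), snd w) \<partial>((M1 \<Otimes>\<^sub>M M2) \<Otimes>\<^sub>M M3)) = (\<integral>\<^sup>+x. \<integral>\<^sup>+x'. \<integral>\<^sup>+r. F (x, r) \<partial>M3 \<partial>M2 \<partial>M1)"
    by (simp add: M3.nn_integral_fst[symmetric] M2.nn_integral_fst[symmetric])
  also have "\<dots> = (\<integral>\<^sup>+p. F p \<partial>(M1 \<Otimes>\<^sub>M M3))"
    by (simp add: M2.emeasure_space_1 M3.nn_integral_fst[symmetric])
  finally show ?thesis .
qed

lemma nn_integral_pair_measure_snd_fst:
  assumes "prob_space M1" "sigma_finite_measure M2" "sigma_finite_measure M3"
    and [measurable]: "F \<in> borel_measurable (M2 \<Otimes>\<^sub>M M3)"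
  shows "(\<integral>\<^sup>+w. F (snd (fst w), snd w) \<partial>((M1 \<Otimes>\<^sub>M M2) \<Otimes>\<^sub>M M3)) = (\<integral>\<^sup>+p. F p \<partial>(M2 \<Otimes>\<^sub>M M3))"
proof -
  interpret M1: prob_space M1 by fact
  interpret M2: sigma_finite_measure M2 by fact
  interpret M3: sigma_finite_measure M3 by fact
  have "(\<integral>\<^sup>+w. F (snd (fst w), snd w) \<partial>((M1 \<Otimes>\<^sub>M M2) \<Otimes>\<^sub>M M3)) = (\<integral>\<^sup>+x. \<integral>\<^sup>+x'. \<integral>\<^sup>+r. F (x', r) \<partial>M3 \<partial>M2 \<partial>M1)"
    by (simp add: M3.nn_integral_fst[symmetric] M2.nn_integral_fst[symmetric])
  also have "\<dots> = (\<integral>\<^sup>+p. F p \<partial>(M2 \<Otimes>\<^sub>M M3))"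
    by (simp add: M1.emeasure_space_1 M3.nn_integral_fst[symmetric])
  finally show ?thesis .
qed

lemma pair_measure_in_couplings:
  assumes "prob_space M" "prob_space N"
  shows "M \<Otimes>\<^sub>M N \<in> couplings M N"
proof -
  interpret pair_prob_space M N
    using assms by (simp add: pair_prob_space_def pair_sigma_finite_def prob_space_imp_sigma_finite)
  have "distr (M \<Otimes>\<^sub>M N) N snd = N"
  proof (rule measure_eqI)
    fix A assume A: "A \<in> sets (distr (M \<Otimes>\<^sub>M N) N snd)"
    then have "emeasure (distr (M \<Otimes>\<^sub>M N) N snd) A = emeasure (M \<Otimes>\<^sub>M N) (space M \<times> A)"
      by (auto simp: emeasure_distr space_pair_measure dest: sets.sets_into_space intro!: arg_cong2[where f=emeasure])
    with A show "emeasure (distr (M \<Otimes>\<^sub>M N) N snd) A = emeasure N A"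
      by (simp add: M2.emeasure_pair_measure_Times M1.emeasure_space_1)
  qed simp
  then show ?thesis
    using assms by (simp add: couplings_def prob_space_pair M2.distr_pair_fst)
qed

lemma is_HUCD:
  assumes "is_HUC \<Theta> Q prior mu Hist PR f u m h" and "l < m"
    and "\<theta> \<in> \<Theta>" "(si, sj) \<in> Q" "0 < prior \<theta> si" "0 < prior \<theta> sj" "y \<in> Hist"
    and "\<gamma> \<in> couplings (mu \<theta> si) (mu \<theta> sj)"
  shows "0 \<le> h l"
    and "AE z in \<gamma> \<Otimes>\<^sub>M PR. ((f (fst (fst z)) y (snd z) - f (snd (fst z)) y (snd z)) \<bullet> u l)\<^sup>2 \<le> h l"
proof -
  show "0 \<le> h l"
    using assms(1,2) by (simp add: is_HUC_def)
  moreover have "AE z in \<gamma> \<Otimes>\<^sub>M PR. \<bar>(f (fst (fst z)) y (snd z) - f (snd (fst z)) y (snd z)) \<bullet> u l\<bar> \<le> sqrt (h l)"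
    using assms unfolding is_HUC_def by (fastforce elim: AE_mp)
  ultimately show "AE z in \<gamma> \<Otimes>\<^sub>M PR. ((f (fst (fst z)) y (snd z) - f (snd (fst z)) y (snd z)) \<bullet> u l)\<^sup>2 \<le> h l"
    by (auto elim!: eventually_mono) (metis abs_ge_zero power2_abs power_mono real_sqrt_pow2)
qed

lemma renyi_div_inner_plus_gaussian_vec_le:
  fixes F :: "'a \<times> 'b \<Rightarrow> real^'d"
  assumes M: "prob_space M" and M': "prob_space M'" and R: "prob_space R"
    and N: "gaussian_vec N \<Sigma>" and w: "0 < w \<bullet> (\<Sigma> *v w)"
    and F_meas: "F \<in> borel_measurable (M \<Otimes>\<^sub>M R)" "F \<in> borel_measurable (M' \<Otimes>\<^sub>M R)"
    and close: "AE z in (M \<Otimes>\<^sub>M M') \<Otimes>\<^sub>M R. ((F (fst (fst z), snd z) - F (snd (fst z), snd z)) \<bullet> w)\<^sup>2 \<le> \<Delta>"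
    and \<Delta>: "0 \<le> \<Delta>" and \<alpha>: "1 < \<alpha>"
  shows "renyi_div \<alpha> (distr (M \<Otimes>\<^sub>M (R \<Otimes>\<^sub>M N)) borel (\<lambda>(x, r, n). (F (x, r) + n) \<bullet> w))
                    (distr (M' \<Otimes>\<^sub>M (R \<Otimes>\<^sub>M N)) borel (\<lambda>(x, r, n). (F (x, r) + n) \<bullet> w))
         \<le> ereal (\<alpha> / 2 * (\<Delta> / (w \<bullet> (\<Sigma> *v w))))"
proof -
  define s where "s = sqrt (w \<bullet> (\<Sigma> *v w))"
  have s: "0 < s" "s\<^sup>2 = w \<bullet> (\<Sigma> *v w)"
    using w by (auto simp: s_def)
  define g where "g p = F p \<bullet> w" for p
  have [measurable]: "g \<in> borel_measurable (M \<Otimes>\<^sub>M R)" "g \<in> borel_measurable (M' \<Otimes>\<^sub>M R)"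
    using F_meas unfolding g_def by (auto intro: borel_measurable_inner)
  define C where "C = (M \<Otimes>\<^sub>M M') \<Otimes>\<^sub>M R"
  have C: "prob_space C"
    unfolding C_def by (intro prob_space_pair M M' R)
  have law: "distr (M \<Otimes>\<^sub>M (R \<Otimes>\<^sub>M N)) borel (\<lambda>(x, r, n). (F (x, r) + n) \<bullet> w)
      = density lborel (\<lambda>z. \<integral>\<^sup>+p. ennreal (normal_density (g p) s z) \<partial>(M \<Otimes>\<^sub>M R))"
    "distr (M' \<Otimes>\<^sub>M (R \<Otimes>\<^sub>M N)) borel (\<lambda>(x, r, n). (F (x, r) + n) \<bullet> w)
      = density lborel (\<lambda>z. \<integral>\<^sup>+p. ennreal (normal_density (g p) s z) \<partial>(M' \<Otimes>\<^sub>M R))"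
    using distr_inner_plus_gaussian_vec[OF M R N w F_meas(1)] distr_inner_plus_gaussian_vec[OF M' R N w F_meas(2)]
    by (simp_all add: g_def s_def)
  have mixture:
    "(\<integral>\<^sup>+p. ennreal (normal_density (g p) s z) \<partial>(M \<Otimes>\<^sub>M R))
       = (\<integral>\<^sup>+c. ennreal (normal_density (g (fst (fst c), snd c)) s z) \<partial>C)"
    "(\<integral>\<^sup>+p. ennreal (normal_density (g p) s z) \<partial>(M' \<Otimes>\<^sub>M R))
       = (\<integral>\<^sup>+c. ennreal (normal_density (g (snd (fst c), snd c)) s z) \<partial>C)" for z
    unfolding C_def
    by (auto simp: normal_density_def intro!: nn_integral_pair_measure_fst_fst[symmetric]
        nn_integral_pair_measure_snd_fst[symmetric] prob_space_imp_sigma_finite M M' R)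
  have "(\<lambda>c. g (fst (fst c), snd c)) \<in> borel_measurable C" "(\<lambda>c. g (snd (fst c), snd c)) \<in> borel_measurable C"
    unfolding C_def by measurable
  moreover have "AE c in C. (g (fst (fst c), snd c) - g (snd (fst c), snd c))\<^sup>2 \<le> \<Delta>"
    using close unfolding C_def by (simp add: g_def inner_diff_left)
  ultimately show ?thesis
    using renyi_div_normal_mixtures_le[OF C _ _ _ \<Delta> s(1) \<alpha>] by (simp add: law mixture s(2))
qed

theorem lemma2:
  fixes \<Theta> :: "'th set" and Q :: "('s \<times> 's) set"
    and prior :: "'th \<Rightarrow> 's \<Rightarrow> real" and mu :: "'th \<Rightarrow> 's \<Rightarrow> 'x measure"
    and MX :: "'x measure" and Hist :: "'h set" and PR :: "'r measure"
    and f :: "'x \<Rightarrow> 'h \<Rightarrow> 'r \<Rightarrow> real^'d" and u :: "nat \<Rightarrow> real^'d"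
    and m l :: nat and h :: "nat \<Rightarrow> real"
    and PN :: "(real^'d) measure" and \<Sigma> :: "real^'d^'d"
    and \<alpha> :: real and \<theta> :: 'th and si sj :: 's and y :: 'h
  assumes mu_prob: "\<And>\<theta> s. \<theta> \<in> \<Theta> \<Longrightarrow> 0 < prior \<theta> s \<Longrightarrow>
                       prob_space (mu \<theta> s) \<and> sets (mu \<theta> s) = sets MX"
    and PR_prob: "prob_space PR"
    and f_meas: "\<And>y. y \<in> Hist \<Longrightarrow> (\<lambda>(x, r). f x y r) \<in> borel_measurable (MX \<Otimes>\<^sub>M PR)"
    and u_sphere: "\<And>i. i < m \<Longrightarrow> norm (u i) = 1"
    and l_idx: "l < m"
    and HUC: "is_HUC \<Theta> Q prior mu Hist PR f u m h"
    and Sigma_sym: "transpose \<Sigma> = \<Sigma>"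
    and Sigma_psd: "\<And>w. 0 \<le> w \<bullet> (\<Sigma> *v w)"
    and PN_gauss: "gaussian_vec PN \<Sigma>"
    and v_pos: "0 < u l \<bullet> (\<Sigma> *v u l)"
    and alpha: "1 < \<alpha>"
    and theta: "\<theta> \<in> \<Theta>"
    and pair: "(si, sj) \<in> Q"
    and prior_pos: "0 < prior \<theta> si" "0 < prior \<theta> sj"
    and hist: "y \<in> Hist"
  shows "renyi_div \<alpha>
           (distr (mu \<theta> si \<Otimes>\<^sub>M (PR \<Otimes>\<^sub>M PN)) borel (\<lambda>(x, r, n). (f x y r + n) \<bullet> u l))
           (distr (mu \<theta> sj \<Otimes>\<^sub>M (PR \<Otimes>\<^sub>M PN)) borel (\<lambda>(x, r, n). (f x y r + n) \<bullet> u l))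
         \<le> ereal (\<alpha> / 2 * (h l / (u l \<bullet> (\<Sigma> *v u l))))"
proof -
  have mu_i: "prob_space (mu \<theta> si)" "sets (mu \<theta> si) = sets MX"
    and mu_j: "prob_space (mu \<theta> sj)" "sets (mu \<theta> sj) = sets MX"
    using mu_prob theta prior_pos by auto
  have f_meas': "(\<lambda>(x, r). f x y r) \<in> borel_measurable (M \<Otimes>\<^sub>M PR)" if "sets M = sets MX" for M
    using f_meas[OF hist] unfolding measurable_cong_sets[OF sets_pair_measure_cong[OF that refl] refl] .
  note HUC_bounds =
    is_HUCD[OF HUC l_idx theta pair prior_pos hist pair_measure_in_couplings[OF mu_i(1) mu_j(1)]]
  show ?thesis
    using renyi_div_inner_plus_gaussian_vec_le[OF mu_i(1) mu_j(1) PR_prob PN_gauss v_pos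
        f_meas'[OF mu_i(2)] f_meas'[OF mu_j(2)] _ HUC_bounds(1) alpha] HUC_bounds(2)
    by simp
qed

end
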